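(* Let $\alpha\in(0,1]$ and let $(c,\{n_{h,\bar h}\})$ be a unitary, modular invariant 2D CFT spectrum in the sense of the context, with central charge $c\geqslant 0$. Define the error term $$\mathcal{E}(\beta_L,\beta_R):=\log Z(\beta_L,\beta_R)-\frac{c}{24}(\beta_L+\beta_R).$$ Then for every $(\beta_L,\beta_R)\in\mathcal{D}_\alpha$ the algorithm $\mathsf{A}_\alpha$ (see context) started at $(\beta_L,\beta_R)$ is well defined and stops after a finite number $N$ of points $(\beta_L^{(1)},\beta_R^{(1)}),\dots,(\beta_L^{(N)},\beta_R^{(N)})$; these satisfy $\beta_L^{(i)}\beta_R^{(i)}>4\pi^2$ for $i=1,\dots,N-1$ and $\beta_L^{(N)},\beta_R^{(N)}>2\pi$; and $$\mathcal{E}(\beta_L,\beta_R)\leqslant\log\left[\sum_{i=1}^{N}\tilde Z_L\big(\alpha;\beta_L^{(i)},\beta_R^{(i)}\big)+\tilde Z_H\big(\alpha;\beta_L^{(N)},\beta_R^{(N)}\big)\right].$$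
   Context: A unitary, modular invariant 2D CFT spectrum consists of a real number $c\geqslant0$ (central charge) and a countable collection of pairs $(h,\bar h)$ with $h,\bar h\geqslant0$, each with a multiplicity $n_{h,\bar h}\in\mathbb{N}$, such that the torus partition function $$Z(\beta_L,\beta_R)=\sum_{h,\bar h}n_{h,\bar h}\,e^{-(h-\frac{c}{24})\beta_L-(\bar h-\frac{c}{24})\beta_R}$$ is finite for all $\beta_L,\beta_R\in(0,\infty)$ and satisfies $Z(\beta_L,\beta_R)=Z(4\pi^2/\beta_L,4\pi^2/\beta_R)$ ($h-\bar h$ need not be an integer). For $\alpha\in(0,1]$ define $$\tilde Z_L(\alpha;\beta_L,\beta_R)=\sum_{\min(h,\bar h)\leqslant\frac{\alpha c}{24}}n_{h,\bar h}e^{-h\beta_L-\bar h\beta_R},\qquad \tilde Z_H(\alpha;\beta_L,\beta_R)=\sum_{h,\bar h>\frac{\alpha c}{24}}n_{h,\bar h}e^{-h\beta_L-\bar h\beta_R}.$$ Let $\phi_\alpha(\beta)=\max\left\{\frac{4\pi^2}{\beta},\ \frac12\left(\alpha(4\pi-\beta)+\sqrt{\alpha^2(4\pi-\beta)^2+16\pi^2(1-\alpha)}\right)\right\}$ and $$\mathcal{D}_\alpha=\{(\beta_L,\beta_R):\ \beta_R>2\pi,\ \beta_L>\phi_\alpha(\beta_R)\}\cup\{(\beta_L,\beta_R):\ \beta_L>2\pi,\ \beta_R>\phi_\alpha(\beta_L)\}.$$ Algorithm $\mathsf{A}_\alpha$: set $(\beta_L^{(1)},\beta_R^{(1)})=(\beta_L,\beta_R)$.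 Given $(b_L,b_R)=(\beta_L^{(i)},\beta_R^{(i)})$: (1) if $b_L>2\pi$ and $b_R>2\pi$, stop and set $N=i$. (2) If $b_L\leqslant2\pi$: put $\tilde b_L=b_L$ if $b_L<2\pi$ and $\tilde b_L=\frac{8\pi^2}{\alpha(b_R-2\pi)+4\pi}$ if $b_L=2\pi$; let $t>0$ be the unique positive solution of $\alpha b_R+\tilde b_L-\frac{4\pi^2}{\tilde b_L}+(1-\alpha)\frac{4\pi^2}{t}-t=0$; set $(\beta_L^{(i+1)},\beta_R^{(i+1)})=(4\pi^2/\tilde b_L,\ t)$. (3) Otherwise ($b_L>2\pi$, $b_R\leqslant2\pi$): do the same with the roles of $L$ and $R$ exchanged, i.e. $\tilde b_R=b_R$ if $b_R<2\pi$, $\tilde b_R=\frac{8\pi^2}{\alpha(b_L-2\pi)+4\pi}$ if $b_R=2\pi$, $t>0$ the unique positive solution of $\alpha b_L+\tilde b_R-\frac{4\pi^2}{\tilde b_R}+(1-\alpha)\frac{4\pi^2}{t}-t=0$, and $(\beta_L^{(i+1)},\beta_R^{(i+1)})=(t,\ 4\pi^2/\tilde b_R)$. *)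

theory Defs
  imports "HOL-Analysis.Analysis"
begin

text \<open>A spectrum is given by the central charge c and a multiplicity function
  n :: real \<times> real \<Rightarrow> nat; the pairs (h, hb) present in the spectrum are those with n (h,hb) > 0.\<close>

definition Zpart :: "real \<Rightarrow> (real \<times> real \<Rightarrow> nat) \<Rightarrow> real \<Rightarrow> real \<Rightarrow> real" where
  "Zpart c n bL bR = (\<Sum>\<^sub>\<infinity>(h,hb)\<in>UNIV. real (n (h,hb)) * exp (-(h - c/24) * bL - (hb - c/24) * bR))"

definition cft_spectrum :: "real \<Rightarrow> (real \<times> real \<Rightarrow> nat) \<Rightarrow> bool" where
  "cft_spectrum c n \<longleftrightarrow>
     c \<ge> 0 \<and>
     countable {p. n p \<noteq> 0} \<and>
     (\<forall>h hb. n (h,hb) \<noteq> 0 \<longrightarrow> h \<ge> 0 \<and> hb \<ge> 0) \<and>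
     (\<forall>bL bR. bL > 0 \<longrightarrow> bR > 0 \<longrightarrow>
        (\<lambda>(h,hb). real (n (h,hb)) * exp (-(h - c/24) * bL - (hb - c/24) * bR)) summable_on UNIV) \<and>
     (\<forall>bL bR. bL > 0 \<longrightarrow> bR > 0 \<longrightarrow>
        Zpart c n bL bR = Zpart c n (4*pi^2/bL) (4*pi^2/bR))"

definition ZL :: "real \<Rightarrow> (real \<times> real \<Rightarrow> nat) \<Rightarrow> real \<Rightarrow> real \<Rightarrow> real \<Rightarrow> real" where
  "ZL c n \<alpha> bL bR = (\<Sum>\<^sub>\<infinity>(h,hb)\<in>{(h,hb). min h hb \<le> \<alpha> * c / 24}.
       real (n (h,hb)) * exp (- h * bL - hb * bR))"

definition ZH :: "real \<Rightarrow> (real \<times> real \<Rightarrow> nat) \<Rightarrow> real \<Rightarrow> real \<Rightarrow> real \<Rightarrow> real" where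
  "ZH c n \<alpha> bL bR = (\<Sum>\<^sub>\<infinity>(h,hb)\<in>{(h,hb). h > \<alpha> * c / 24 \<and> hb > \<alpha> * c / 24}.
       real (n (h,hb)) * exp (- h * bL - hb * bR))"

definition err :: "real \<Rightarrow> (real \<times> real \<Rightarrow> nat) \<Rightarrow> real \<Rightarrow> real \<Rightarrow> real" where
  "err c n bL bR = ln (Zpart c n bL bR) - c/24 * (bL + bR)"

definition phi :: "real \<Rightarrow> real \<Rightarrow> real" where
  "phi \<alpha> \<beta> = max (4*pi^2/\<beta>)
     ((\<alpha> * (4*pi - \<beta>) + sqrt (\<alpha>^2 * (4*pi - \<beta>)^2 + 16*pi^2*(1 - \<alpha>))) / 2)"

definition Dom :: "real \<Rightarrow> (real \<times> real) set" where
  "Dom \<alpha> = {(bL,bR). bR > 2*pi \<and> bL > phi \<alpha> bR} \<union> {(bL,bR). bL > 2*pi \<and> bR > phi \<alpha> bL}"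

text \<open>Half-step: b is the variable that is \<le> 2 pi, b' the other one. Returns the modified b.\<close>
definition btilde :: "real \<Rightarrow> real \<Rightarrow> real \<Rightarrow> real" where
  "btilde \<alpha> b b' = (if b < 2*pi then b else 8*pi^2 / (\<alpha> * (b' - 2*pi) + 4*pi))"

definition t_eq :: "real \<Rightarrow> real \<Rightarrow> real \<Rightarrow> real \<Rightarrow> bool" where
  "t_eq \<alpha> bt b' t \<longleftrightarrow> \<alpha> * b' + bt - 4*pi^2/bt + (1 - \<alpha>) * 4*pi^2 / t - t = 0"

text \<open>One step of algorithm A_alpha from (bL,bR) to (bL',bR'), including the requirement
  that the positive solution t exists and is unique (well-definedness).\<close>
definition alg_step :: "real \<Rightarrow> real \<times> real \<Rightarrow> real \<times> real \<Rightarrow> bool" where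
  "alg_step \<alpha> p q \<longleftrightarrow>
     (let bL = fst p; bR = snd p in
      if bL \<le> 2*pi then
        (let bt = btilde \<alpha> bL bR in
          (\<exists>!t. t > 0 \<and> t_eq \<alpha> bt bR t) \<and>
          fst q = 4*pi^2 / bt \<and> snd q > 0 \<and> t_eq \<alpha> bt bR (snd q))
      else if bR \<le> 2*pi then
        (let bt = btilde \<alpha> bR bL in
          (\<exists>!t. t > 0 \<and> t_eq \<alpha> bt bL t) \<and>
          snd q = 4*pi^2 / bt \<and> fst q > 0 \<and> t_eq \<alpha> bt bL (fst q))
      else False)"

end

theory Submission
  imports Defs
begin

(* Write Z = exp ((c/24) (bL + bR)) * Zred, so that the error term is ln Zred, and split
   Zred = ZL + ZH.  On the states counted by ZH both weights exceed alpha c/24, so ZH at (bL, bR)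
   is bounded by Zred at smaller inverse temperatures (a', b') times
   exp (-(alpha c/24) (bL - a' + bR - b')), and modular invariance turns this into Zred at the
   dual point (4 pi^2/a', 4 pi^2/b').  A step of the algorithm is such a move with the two
   exponentials balanced, so along the run Zred (beta 1) <= sum_i ZL (beta i) + ZH (beta N).

   For termination write the current point as (x, y) with x <= 2 pi < y.  While x < 2 pi a step
   preserves gfun x + alpha y, where gfun x = x - (1 - alpha) 4 pi^2/x, and increases x by a
   fixed amount: gfun has bounded slope, and the increase of gfun is bounded below by the
   condition defining the domain D_alpha.  Once x reaches 2 pi, one more step puts both
   coordinates above 2 pi. *)

section \<open>The step equation\<close>

definition gfun :: "real \<Rightarrow> real \<Rightarrow> real" where
  "gfun \<alpha> x = x - (1 - \<alpha>) * 4*pi^2 / x"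

definition gfun_inv :: "real \<Rightarrow> real \<Rightarrow> real" where
  "gfun_inv \<alpha> A = (A + sqrt (A^2 + 16*pi^2*(1 - \<alpha>))) / 2"

lemma gfun_eq: "gfun \<alpha> x = x - 4*pi^2/x + \<alpha>*(4*pi^2/x)"
  unfolding gfun_def by (simp add: algebra_simps diff_divide_distrib)

lemma gfun_add_eq: "gfun \<alpha> x + \<alpha>*y = x + (2*\<alpha> - 1)*(4*pi^2)/x + \<alpha>*(y - 4*pi^2/x)"
proof -
  have "(2*\<alpha> - 1)*(4*pi^2)/x = 2*(\<alpha>*(4*pi^2/x)) - 4*pi^2/x"
    by (cases "x = 0") (simp_all add: field_simps)
  then show ?thesis
    using gfun_eq[of \<alpha> x] unfolding right_diff_distrib by linarith
qed

lemma gfun_diff: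
  assumes "0 < a" "0 < b"
  shows "gfun \<alpha> b - gfun \<alpha> a = (b - a) * (1 + (1 - \<alpha>) * 4*pi^2 / (a*b))"
  using assms unfolding gfun_def by (simp add: field_simps)

lemma gfun_less_iff:
  assumes "0 < a" "0 < b" "\<alpha> \<le> 1"
  shows "gfun \<alpha> a < gfun \<alpha> b \<longleftrightarrow> a < b"
proof -
  have "0 < 1 + (1 - \<alpha>) * 4*pi^2 / (a*b)"
    using assms by (smt (verit) divide_nonneg_pos mult_nonneg_nonneg mult_pos_pos pi_gt_zero zero_le_power2)
  then show ?thesis
    using gfun_diff[OF assms(1,2), of \<alpha>] by (smt (verit) mult_pos_pos mult_neg_pos)
qed

lemma gfun_le_iff:
  assumes "0 < a" "0 < b" "\<alpha> \<le> 1"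
  shows "gfun \<alpha> a \<le> gfun \<alpha> b \<longleftrightarrow> a \<le> b"
  using gfun_less_iff[of b a \<alpha>] assms by linarith

lemma gfun_diff_le:
  assumes "\<alpha> \<le> 1" "0 < x\<^sub>1" "x\<^sub>1 \<le> a" "a \<le> b"
  shows "gfun \<alpha> b - gfun \<alpha> a \<le> (b - a) * (1 + (1 - \<alpha>) * 4*pi^2 / x\<^sub>1^2)"
proof -
  have "x\<^sub>1^2 \<le> a*b"
    unfolding power2_eq_square using assms by (intro mult_mono) auto
  then have "(1 - \<alpha>) * 4*pi^2 / (a*b) \<le> (1 - \<alpha>) * 4*pi^2 / x\<^sub>1^2"
    using assms by (intro divide_left_mono) auto
  then have "(b - a) * (1 + (1 - \<alpha>) * 4*pi^2 / (a*b)) \<le> (b - a) * (1 + (1 - \<alpha>) * 4*pi^2 / x\<^sub>1^2)"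
    using assms by (intro mult_left_mono) auto
  then show ?thesis
    using gfun_diff[of a b \<alpha>] assms by simp
qed

lemma gfun_inv_correct:
  assumes "\<alpha> \<le> 1" "0 < A \<or> \<alpha> < 1"
  shows "0 < gfun_inv \<alpha> A" "gfun \<alpha> (gfun_inv \<alpha> A) = A"
proof -
  define D where "D = A^2 + 16*pi^2*(1 - \<alpha>)"
  have "A^2 \<le> D" "\<alpha> < 1 \<Longrightarrow> A^2 < D"
    using assms by (simp_all add: D_def)
  then have "\<bar>A\<bar> \<le> sqrt D" "\<alpha> < 1 \<Longrightarrow> \<bar>A\<bar> < sqrt D"
    using real_sqrt_le_mono real_sqrt_less_mono by fastforce+
  then have "0 < A + sqrt D"
    using assms(2) abs_ge_minus_self[of A] by linarith
  then show pos: "0 < gfun_inv \<alpha> A"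
    unfolding gfun_inv_def D_def[symmetric] by simp
  have "sqrt D ^ 2 = D"
    using \<open>A^2 \<le> D\<close> by (simp add: order_trans[OF zero_le_power2])
  then have "(gfun_inv \<alpha> A)^2 - A * gfun_inv \<alpha> A = 4*pi^2*(1 - \<alpha>)"
    unfolding gfun_inv_def D_def[symmetric] by (simp add: field_simps power2_eq_square D_def)
  then show "gfun \<alpha> (gfun_inv \<alpha> A) = A"
    using pos unfolding gfun_def by (simp add: field_simps power2_eq_square)
qed

lemma t_eq_iff_gfun: "t_eq \<alpha> bt b t \<longleftrightarrow> gfun \<alpha> t = \<alpha>*b + bt - 4*pi^2/bt"
  unfolding t_eq_def gfun_def by linarith

lemma btilde_bounds:
  assumes "0 < \<alpha>" "\<alpha> \<le> 1" "0 < x" "x \<le> 2*pi" "2*pi < y" "4*pi^2 < x*y"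
  shows "0 < btilde \<alpha> x y" "btilde \<alpha> x y \<le> x" "btilde \<alpha> x y < 2*pi"
    "4*pi^2 \<le> btilde \<alpha> x y * y"
proof -
  have "0 < btilde \<alpha> x y \<and> btilde \<alpha> x y \<le> x \<and> btilde \<alpha> x y < 2*pi \<and> 4*pi^2 \<le> btilde \<alpha> x y * y"
  proof (cases "x < 2*pi")
    case True
    then show ?thesis using assms by (simp add: btilde_def)
  next
    case False
    define d where "d = \<alpha>*(y - 2*pi) + 4*pi"
    have x: "x = 2*pi" using False assms by linarith
    have d: "4*pi < d" using assms by (simp add: d_def)
    have "0 < d" using d pi_gt_zero by linarith
    have "8*pi^2 < 2*pi*d" using d pi_gt_zero by (simp add: power2_eq_square)
    then have small: "8*pi^2/d < 2*pi"
      using \<open>0 < d\<close> by (simp add: divide_less_eq)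
    have "0 \<le> 4*pi^2*((2 - \<alpha>)*(y - 2*pi))"
      using assms by simp
    also have "\<dots> = 8*pi^2*y - 4*pi^2*d"
      by (simp add: d_def algebra_simps power2_eq_square)
    finally have "4*pi^2 \<le> 8*pi^2/d * y"
      using \<open>0 < d\<close> by (simp add: le_divide_eq mult.commute mult.left_commute)
    with small show ?thesis
      using x \<open>0 < d\<close> pi_gt_zero by (simp add: btilde_def d_def[symmetric])
  qed
  then show "0 < btilde \<alpha> x y" "btilde \<alpha> x y \<le> x" "btilde \<alpha> x y < 2*pi"
    "4*pi^2 \<le> btilde \<alpha> x y * y" by auto
qed

lemma step_solution:
  fixes \<alpha> x y :: real
  defines "bt \<equiv> btilde \<alpha> x y"
  defines "A \<equiv> \<alpha>*y + bt - 4*pi^2/bt"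
  assumes "0 < \<alpha>" "\<alpha> \<le> 1" "0 < x" "x \<le> 2*pi" "2*pi < y" "4*pi^2 < x*y"
  shows "0 < gfun_inv \<alpha> A" "t_eq \<alpha> bt y (gfun_inv \<alpha> A)" "\<exists>!t. 0 < t \<and> t_eq \<alpha> bt y t"
proof -
  note b = btilde_bounds[OF assms(3-8), folded bt_def]
  have "4*pi^2/bt \<le> y"
    using b by (simp add: divide_le_eq mult.commute)
  then have "0 < A \<or> \<alpha> < 1"
    using b assms(4) by (cases "\<alpha> = 1") (auto simp: A_def)
  note inv = gfun_inv_correct[OF assms(4) this]
  show "0 < gfun_inv \<alpha> A" "t_eq \<alpha> bt y (gfun_inv \<alpha> A)"
    using inv by (simp_all add: t_eq_iff_gfun A_def)
  show "\<exists>!t. 0 < t \<and> t_eq \<alpha> bt y t"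
  proof (rule ex1I)
    show "0 < gfun_inv \<alpha> A \<and> t_eq \<alpha> bt y (gfun_inv \<alpha> A)"
      using inv by (simp add: t_eq_iff_gfun A_def)
  next
    fix t assume "0 < t \<and> t_eq \<alpha> bt y t"
    then show "t = gfun_inv \<alpha> A"
      using inv gfun_less_iff[of t "gfun_inv \<alpha> A" \<alpha>] gfun_less_iff[of "gfun_inv \<alpha> A" t \<alpha>] assms(4)
      by (auto simp: t_eq_iff_gfun A_def)
  qed
qed

lemma step_solution_bounds:
  fixes \<alpha> x y t :: real
  defines "bt \<equiv> btilde \<alpha> x y"
  assumes "0 < \<alpha>" "\<alpha> \<le> 1" "0 < x" "x \<le> 2*pi" "2*pi < y" "4*pi^2 < x*y"
    and "0 < t" "t_eq \<alpha> bt y t"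
  shows "4*pi^2 \<le> t*y" "4*pi^2/bt + t - bt - 4*pi^2/t \<le> \<alpha>*(x + y - bt - 4*pi^2/t)"
proof -
  note b = btilde_bounds[OF assms(2-7), folded bt_def]
  have y: "0 < y" using assms(6) pi_gt_zero by linarith
  have t: "gfun \<alpha> t = \<alpha>*y + bt - 4*pi^2/bt"
    using assms(9) by (simp add: t_eq_iff_gfun)
  have "gfun \<alpha> (4*pi^2/y) = 4*pi^2/y - (1 - \<alpha>)*y"
    using y by (simp add: gfun_def field_simps)
  also have "\<dots> \<le> \<alpha>*y + bt - 4*pi^2/bt"
  proof -
    have "\<alpha>*y + bt - 4*pi^2/bt - (4*pi^2/y - (1 - \<alpha>)*y) = (bt*y - 4*pi^2)*(1/bt + 1/y)"
      using b y by (simp add: field_simps)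
    moreover have "0 \<le> (bt*y - 4*pi^2)*(1/bt + 1/y)"
      using b y by simp
    ultimately show ?thesis by linarith
  qed
  finally have "4*pi^2/y \<le> t"
    using gfun_le_iff[of "4*pi^2/y" t \<alpha>] y assms(3,8) t by simp
  then show "4*pi^2 \<le> t*y"
    using y by (simp add: divide_le_eq)
  have "4*pi^2/bt + t - bt - 4*pi^2/t = \<alpha>*y - \<alpha>*(4*pi^2/t)"
    using t assms(8) unfolding gfun_def by (simp add: field_simps)
  then show "4*pi^2/bt + t - bt - 4*pi^2/t \<le> \<alpha>*(x + y - bt - 4*pi^2/t)"
    using b assms(2) by (simp add: algebra_simps)
qed

text \<open>A step in coordinates \<open>(x, y)\<close> with \<open>x \<le> 2\<pi> < y\<close>. The new coordinate \<open>t\<close> is listed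
  first again, so relative to \<open>(bL, bR)\<close> the coordinates swap roles at every step; \<open>orient\<close>
  undoes this.\<close>

definition astep :: "real \<Rightarrow> real \<times> real \<Rightarrow> real \<times> real" where
  "astep \<alpha> p = (let bt = btilde \<alpha> (fst p) (snd p)
     in (gfun_inv \<alpha> (\<alpha> * snd p + bt - 4*pi^2/bt), 4*pi^2/bt))"

definition orient :: "bool \<Rightarrow> 'a \<times> 'a \<Rightarrow> 'a \<times> 'a" where
  "orient b p = (if b then p else prod.swap p)"

lemma orient_simps [simp]:
  "fst (orient b p) * snd (orient b p) = fst p * snd p"
  "(0 < fst (orient b p) \<and> 0 < snd (orient b p)) \<longleftrightarrow> (0 < fst p \<and> 0 < snd p)"
  "(2*pi < fst (orient b p) \<and> 2*pi < snd (orient b p)) \<longleftrightarrow> (2*pi < fst p \<and> 2*pi < snd p)"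
  by (cases p; auto simp: orient_def)+

lemma alg_step_astep:
  assumes "0 < \<alpha>" "\<alpha> \<le> 1" "0 < x" "x \<le> 2*pi" "2*pi < y" "4*pi^2 < x*y"
  shows "alg_step \<alpha> (orient b (x,y)) (orient (\<not> b) (astep \<alpha> (x,y)))"
proof -
  note sol = step_solution[OF assms]
  have "\<not> y \<le> 2*pi" using assms(5) by simp
  then show ?thesis
    using sol assms(4) by (cases b) (simp_all add: alg_step_def orient_def astep_def Let_def)
qed

lemma astep_from_2pi:
  assumes "0 < \<alpha>" "\<alpha> \<le> 1" "2*pi < y"
  shows "2*pi < fst (astep \<alpha> (2*pi, y))" "2*pi < snd (astep \<alpha> (2*pi, y))"
proof -
  define d where "d = \<alpha>*(y - 2*pi) + 4*pi"
  define bt where "bt = btilde \<alpha> (2*pi) y"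
  define A where "A = \<alpha>*y + bt - 4*pi^2/bt"
  have d: "4*pi < d" using assms by (simp add: d_def)
  have "0 < d" using d pi_gt_zero by linarith
  have bt: "bt = 8*pi^2/d" by (simp add: bt_def btilde_def d_def)
  have "4*pi^2/bt = d/2"
    using \<open>0 < d\<close> pi_gt_zero by (simp add: bt field_simps power2_eq_square)
  then show "2*pi < snd (astep \<alpha> (2*pi, y))"
    using d by (simp add: astep_def bt_def[symmetric] Let_def)
  have "4*pi^2 < 2*pi*y" using assms(3) pi_gt_zero by (simp add: power2_eq_square)
  then have sol: "0 < gfun_inv \<alpha> A" "t_eq \<alpha> bt y (gfun_inv \<alpha> A)"
    using step_solution[OF assms(1,2) _ order_refl assms(3)] pi_gt_zero
    by (simp_all add: A_def bt_def)
  have "\<alpha>*y = d - 4*pi + 2*pi*\<alpha>" by (simp add: d_def algebra_simps)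
  then have "A - 2*pi*\<alpha> = d/2 - 4*pi + 8*pi^2/d"
    using \<open>4*pi^2/bt = d/2\<close> unfolding A_def bt by linarith
  also have "\<dots> = (d - 4*pi)^2/(2*d)"
    using \<open>0 < d\<close> by (simp add: field_simps power2_eq_square)
  also have "\<dots> > 0"
    using d \<open>0 < d\<close> by simp
  finally have "gfun \<alpha> (2*pi) < A"
    using pi_gt_zero by (simp add: gfun_def field_simps power2_eq_square)
  also have "A = gfun \<alpha> (gfun_inv \<alpha> A)"
    using sol(2) by (simp add: t_eq_iff_gfun A_def)
  finally have "gfun \<alpha> (2*pi) < gfun \<alpha> (gfun_inv \<alpha> A)" .
  then have "2*pi < gfun_inv \<alpha> A"
    using gfun_less_iff[of "2*pi" "gfun_inv \<alpha> A" \<alpha>] sol(1) assms(2) pi_gt_zero by simp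
  then show "2*pi < fst (astep \<alpha> (2*pi, y))"
    by (simp add: astep_def bt_def[symmetric] A_def Let_def)
qed

lemma astep_below_2pi:
  assumes "0 < \<alpha>" "\<alpha> \<le> 1" "0 < x" "x < 2*pi" "2*pi < y" "4*pi^2 < x*y"
  defines "x' \<equiv> fst (astep \<alpha> (x, y))" and "y' \<equiv> snd (astep \<alpha> (x, y))"
  shows "gfun \<alpha> x' - gfun \<alpha> x = \<alpha>*(y - 4*pi^2/x)" "gfun \<alpha> x' + \<alpha>*y' = gfun \<alpha> x + \<alpha>*y"
    "x < x'" "2*pi < y'" "4*pi^2 < x'*y'"
proof -
  have bt: "btilde \<alpha> x y = x" using assms(4) by (simp add: btilde_def)
  note sol = step_solution[OF assms(1-3) less_imp_le[OF assms(4)] assms(5,6), unfolded bt]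
  have y': "y' = 4*pi^2/x" by (simp add: y'_def astep_def bt)
  have x': "0 < x'" "gfun \<alpha> x' = \<alpha>*y + x - 4*pi^2/x"
    using sol by (simp_all add: x'_def astep_def bt t_eq_iff_gfun)
  then show gain: "gfun \<alpha> x' - gfun \<alpha> x = \<alpha>*(y - 4*pi^2/x)"
    using gfun_eq[of \<alpha> x] unfolding right_diff_distrib by linarith
  then show "gfun \<alpha> x' + \<alpha>*y' = gfun \<alpha> x + \<alpha>*y"
    unfolding y' right_diff_distrib by linarith
  have "4*pi^2/x < y" using assms(3,6) by (simp add: divide_less_eq mult.commute)
  then have "0 < \<alpha>*(y - 4*pi^2/x)"
    using assms(1) by simp
  then have "gfun \<alpha> x < gfun \<alpha> x'"
    using gain by linarith
  then show "x < x'"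
    using gfun_less_iff[OF assms(3) x'(1) assms(2)] by simp
  then show "4*pi^2 < x'*y'"
    using assms(3) by (simp add: y' less_divide_eq)
  show "2*pi < y'"
    using assms(3,4) by (simp add: y' less_divide_eq power2_eq_square)
qed

section \<open>Termination of the algorithm\<close>

lemma add_divide_le_max:
  fixes a b x C :: real
  assumes "0 < a" "a \<le> x" "x \<le> b"
  shows "x + C/x \<le> max (a + C/a) (b + C/b)"
proof (cases "C \<le> a*x")
  case True
  have "x + C/x - (b + C/b) = (b - x)*(C/(b*x) - 1)"
    using assms by (simp add: field_simps)
  moreover have "C \<le> b*x"
    using True assms by (smt (verit) mult_right_mono)
  then have "C/(b*x) \<le> 1"
    using assms by (simp add: divide_le_eq)
  ultimately have "x + C/x \<le> b + C/b"
    using assms by (smt (verit) mult_nonneg_nonpos)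
  then show ?thesis by simp
next
  case False
  have "x + C/x - (a + C/a) = (x - a)*(1 - C/(a*x))"
    using assms by (simp add: field_simps)
  moreover have "1 < C/(a*x)"
    using False assms by (simp add: less_divide_eq)
  ultimately have "x + C/x \<le> a + C/a"
    using assms by (smt (verit) mult_nonneg_nonpos)
  then show ?thesis by simp
qed

lemma astep_progress:
  assumes "0 < \<alpha>" "\<alpha> \<le> 1" "0 < x\<^sub>1" "x\<^sub>1 \<le> x" "x < 2*pi" "2*pi < y" "4*pi^2 < x*y"
  shows "gfun \<alpha> x + \<alpha>*y - max (x\<^sub>1 + (2*\<alpha> - 1)*(4*pi^2)/x\<^sub>1) (4*pi*\<alpha>)
    \<le> (fst (astep \<alpha> (x, y)) - x) * (1 + (1 - \<alpha>)*4*pi^2/x\<^sub>1^2)"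
proof -
  have "0 < x" using assms(3,4) by linarith
  note succ = astep_below_2pi[OF assms(1,2) this assms(5-7)]
  have right_end: "2*pi + (2*\<alpha> - 1)*(4*pi^2)/(2*pi) = 4*pi*\<alpha>"
    by (simp add: field_simps power2_eq_square)
  have "x + (2*\<alpha> - 1)*(4*pi^2)/x
      \<le> max (x\<^sub>1 + (2*\<alpha> - 1)*(4*pi^2)/x\<^sub>1) (2*pi + (2*\<alpha> - 1)*(4*pi^2)/(2*pi))"
    using assms(3-5) by (intro add_divide_le_max) auto
  then have "x + (2*\<alpha> - 1)*(4*pi^2)/x \<le> max (x\<^sub>1 + (2*\<alpha> - 1)*(4*pi^2)/x\<^sub>1) (4*pi*\<alpha>)"
    unfolding right_end .
  then have "gfun \<alpha> x + \<alpha>*y - max (x\<^sub>1 + (2*\<alpha> - 1)*(4*pi^2)/x\<^sub>1) (4*pi*\<alpha>)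
      \<le> gfun \<alpha> (fst (astep \<alpha> (x, y))) - gfun \<alpha> x"
    using gfun_add_eq[of \<alpha> x y] succ(1) by linarith
  also have "\<dots> \<le> (fst (astep \<alpha> (x, y)) - x) * (1 + (1 - \<alpha>)*4*pi^2/x\<^sub>1^2)"
    using gfun_diff_le[OF assms(2,3,4)] succ(3) by simp
  finally show ?thesis .
qed

lemma funpow_reaches_threshold:
  fixes g :: "'a \<Rightarrow> real"
  assumes "0 < \<delta>" "P s"
    and step: "\<And>s. P s \<Longrightarrow> g s < b \<Longrightarrow> P (f s) \<and> g s + \<delta> \<le> g (f s)"
  shows "\<exists>M. (\<forall>j\<le>M. P ((f ^^ j) s)) \<and> (\<forall>j<M. g ((f ^^ j) s) < b) \<and> b \<le> g ((f ^^ M) s)"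
proof -
  obtain k :: nat where "b - g s < k * \<delta>"
    using reals_Archimedean3[OF assms(1)] by blast
  with \<open>P s\<close> show ?thesis
  proof (induction k arbitrary: s)
    case 0
    then show ?case by (intro exI[of _ 0]) simp
  next
    case (Suc k)
    show ?case
    proof (cases "b \<le> g s")
      case True
      with Suc.prems show ?thesis by (intro exI[of _ 0]) simp
    next
      case False
      with step Suc.prems have "P (f s)" "b - g (f s) < k * \<delta>"
        by (fastforce simp: algebra_simps)+
      then obtain M where M: "\<forall>j\<le>M. P ((f ^^ j) (f s))" "\<forall>j<M. g ((f ^^ j) (f s)) < b"
          "b \<le> g ((f ^^ M) (f s))"
        using Suc.IH by blast
      have shift: "(f ^^ Suc j) s = (f ^^ j) (f s)" for j
        by (simp add: funpow_Suc_right del: funpow.simps)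
      have "P ((f ^^ j) s)" if "j \<le> Suc M" for j
        using that M(1) Suc.prems(1) shift by (cases j) auto
      moreover have "\<forall>j<Suc M. g ((f ^^ j) s) < b"
        using M(2) False shift by (simp add: All_less_Suc2)
      ultimately show ?thesis
        using M(3) shift by (intro exI[of _ "Suc M"]) auto
    qed
  qed
qed

lemma astep_reaches_2pi:
  fixes \<alpha> x\<^sub>1 y\<^sub>1 :: real
  defines "s \<equiv> \<lambda>j. (astep \<alpha> ^^ j) (x\<^sub>1, y\<^sub>1)"
  assumes "0 < \<alpha>" "\<alpha> \<le> 1" "0 < x\<^sub>1" "x\<^sub>1 < 2*pi" "2*pi < y\<^sub>1" "4*pi^2 < x\<^sub>1*y\<^sub>1"
    and entry: "4*pi*\<alpha> < gfun \<alpha> x\<^sub>1 + \<alpha>*y\<^sub>1"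
  shows "\<exists>M. (\<forall>j\<le>M. 0 < fst (s j) \<and> 2*pi < snd (s j) \<and> 4*pi^2 < fst (s j) * snd (s j)) \<and>
    (\<forall>j<M. fst (s j) < 2*pi) \<and> 2*pi \<le> fst (s M)"
proof -
  define I where "I = gfun \<alpha> x\<^sub>1 + \<alpha>*y\<^sub>1"
  define m where "m = max (x\<^sub>1 + (2*\<alpha> - 1)*(4*pi^2)/x\<^sub>1) (4*pi*\<alpha>)"
  define K where "K = 1 + (1 - \<alpha>)*4*pi^2/x\<^sub>1^2"
  define \<delta> where "\<delta> = (I - m)/K"
  define P where "P p \<longleftrightarrow> x\<^sub>1 \<le> fst p \<and> 2*pi < snd p \<and> 4*pi^2 < fst p * snd p \<and>
    gfun \<alpha> (fst p) + \<alpha> * snd p = I" for p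
  have "0 < K"
    unfolding K_def using assms(3) by (smt (verit) divide_nonneg_pos mult_nonneg_nonneg pi_gt_zero
        zero_le_power2 zero_less_power assms(4))
  have "4*pi^2/x\<^sub>1 < y\<^sub>1"
    using assms(4,7) by (simp add: divide_less_eq mult.commute)
  then have "x\<^sub>1 + (2*\<alpha> - 1)*(4*pi^2)/x\<^sub>1 < I"
    using gfun_add_eq[of \<alpha> x\<^sub>1 y\<^sub>1] assms(2) by (simp add: I_def)
  then have "0 < \<delta>"
    using entry \<open>0 < K\<close> by (simp add: \<delta>_def m_def I_def)
  have "P (astep \<alpha> p) \<and> fst p + \<delta> \<le> fst (astep \<alpha> p)" if "P p" "fst p < 2*pi" for p
  proof -
    obtain x y where p: "p = (x, y)" by fastforce
    have x: "x\<^sub>1 \<le> x" "0 < x" "x < 2*pi" "2*pi < y" "4*pi^2 < x*y" "gfun \<alpha> x + \<alpha>*y = I"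
      using that assms(4) by (auto simp: P_def p)
    note succ = astep_below_2pi[OF assms(2,3) x(2-5)]
    have "\<delta> * K \<le> (fst (astep \<alpha> (x, y)) - x) * K"
      using astep_progress[OF assms(2,3,4) x(1,3-5)] \<open>0 < K\<close> x(6)
      by (simp add: \<delta>_def m_def K_def)
    then show ?thesis
      using succ x(1,6) \<open>0 < K\<close> by (simp add: P_def p)
  qed
  moreover have "P (x\<^sub>1, y\<^sub>1)" by (simp add: P_def I_def assms(6,7))
  ultimately obtain M where M: "\<forall>j\<le>M. P (s j)" "\<forall>j<M. fst (s j) < 2*pi" "2*pi \<le> fst (s M)"
    unfolding s_def using funpow_reaches_threshold[OF \<open>0 < \<delta>\<close>, of P "(x\<^sub>1, y\<^sub>1)" fst "2*pi"] by blast
  have "0 < fst (s j)" if "P (s j)" for j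
    using that assms(4) by (simp add: P_def)
  with M show ?thesis by (intro exI[of _ M]) (auto simp: P_def)
qed

lemma astep_run:
  fixes \<alpha> x\<^sub>1 y\<^sub>1 :: real
  defines "s \<equiv> \<lambda>j. (astep \<alpha> ^^ j) (x\<^sub>1, y\<^sub>1)"
  assumes "0 < \<alpha>" "\<alpha> \<le> 1" "0 < x\<^sub>1" "x\<^sub>1 \<le> 2*pi" "2*pi < y\<^sub>1" "4*pi^2 < x\<^sub>1*y\<^sub>1"
    and entry: "x\<^sub>1 < 2*pi \<Longrightarrow> 4*pi*\<alpha> < gfun \<alpha> x\<^sub>1 + \<alpha>*y\<^sub>1"
  shows "\<exists>M. (\<forall>j<M. 0 < fst (s j) \<and> fst (s j) \<le> 2*pi \<and> 2*pi < snd (s j) \<and>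
      4*pi^2 < fst (s j) * snd (s j)) \<and> 2*pi < fst (s M) \<and> 2*pi < snd (s M)"
proof -
  obtain M where M: "\<forall>j\<le>M. 0 < fst (s j) \<and> 2*pi < snd (s j) \<and> 4*pi^2 < fst (s j) * snd (s j)"
    "\<forall>j<M. fst (s j) < 2*pi" "2*pi \<le> fst (s M)"
  proof (cases "x\<^sub>1 = 2*pi")
    case True
    then show ?thesis using that[of 0] assms by (simp add: s_def)
  next
    case False
    then show ?thesis
      using that astep_reaches_2pi[OF assms(2,3,4) _ assms(6,7) entry] assms(5) unfolding s_def by fastforce
  qed
  show ?thesis
  proof (cases "fst (s M) = 2*pi")
    case False
    with M show ?thesis by (intro exI[of _ M]) auto
  next
    case True
    have "s (Suc M) = astep \<alpha> (s M)"
      by (simp add: s_def)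
    with True have "s (Suc M) = astep \<alpha> (2*pi, snd (s M))"
      by (metis prod.collapse)
    then have "2*pi < fst (s (Suc M)) \<and> 2*pi < snd (s (Suc M))"
      using astep_from_2pi[OF assms(2,3)] M(1) by simp
    with M True show ?thesis
      by (intro exI[of _ "Suc M"]) (auto simp: less_Suc_eq)
  qed
qed

definition alg_run :: "real \<Rightarrow> nat \<Rightarrow> (nat \<Rightarrow> real \<times> real) \<Rightarrow> bool" where
  "alg_run \<alpha> N \<beta> \<longleftrightarrow> 1 \<le> N \<and>
     (\<forall>i. 1 \<le> i \<and> i < N \<longrightarrow> alg_step \<alpha> (\<beta> i) (\<beta> (Suc i)) \<and> 4*pi^2 < fst (\<beta> i) * snd (\<beta> i)) \<and>
     (\<forall>i. 1 \<le> i \<and> i \<le> N \<longrightarrow> 0 < fst (\<beta> i) \<and> 0 < snd (\<beta> i)) \<and>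
     2*pi < fst (\<beta> N) \<and> 2*pi < snd (\<beta> N)"

lemma alg_run_from_astep:
  assumes "0 < \<alpha>" "\<alpha> \<le> 1" "0 < x\<^sub>1" "x\<^sub>1 \<le> 2*pi" "2*pi < y\<^sub>1" "4*pi^2 < x\<^sub>1*y\<^sub>1"
    and "x\<^sub>1 < 2*pi \<Longrightarrow> 4*pi*\<alpha> < gfun \<alpha> x\<^sub>1 + \<alpha>*y\<^sub>1"
  shows "\<exists>N \<beta>. alg_run \<alpha> N \<beta> \<and> \<beta> 1 = orient b (x\<^sub>1, y\<^sub>1)"
proof -
  define s where "s j = (astep \<alpha> ^^ j) (x\<^sub>1, y\<^sub>1)" for j
  obtain M where M: "\<forall>j<M. 0 < fst (s j) \<and> fst (s j) \<le> 2*pi \<and> 2*pi < snd (s j) \<and>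
      4*pi^2 < fst (s j) * snd (s j)" "2*pi < fst (s M)" "2*pi < snd (s M)"
    using astep_run[OF assms] unfolding s_def by blast
  define \<beta> where "\<beta> k = orient (b = even (k - 1)) (s (k - 1))" for k
  have \<beta>: "\<beta> (Suc j) = orient (b = even j) (s j)" for j
    by (simp add: \<beta>_def)
  have "alg_step \<alpha> (\<beta> i) (\<beta> (Suc i)) \<and> 4*pi^2 < fst (\<beta> i) * snd (\<beta> i)"
    if i: "1 \<le> i" "i < Suc M" for i
  proof -
    obtain j where j: "i = Suc j" "j < M" using i by (cases i) auto
    have "s (Suc j) = astep \<alpha> (fst (s j), snd (s j))"
      by (simp add: s_def)
    then show ?thesis
      using alg_step_astep[of \<alpha> "fst (s j)" "snd (s j)" "b = even j"] M(1) j assms(1,2)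
      by (simp add: \<beta>)
  qed
  moreover have "0 < fst (\<beta> i) \<and> 0 < snd (\<beta> i)" if i: "1 \<le> i" "i \<le> Suc M" for i
  proof -
    obtain j where j: "i = Suc j" "j \<le> M" using i by (cases i) auto
    have two_pi: "0 < 2*pi" using pi_gt_zero by simp
    have "0 < fst (s j) \<and> 0 < snd (s j)"
    proof (cases "j = M")
      case True
      then show ?thesis using M(2,3) less_trans[OF two_pi] by blast
    qed (use M(1) j less_trans[OF two_pi] in auto)
    then show ?thesis by (simp add: \<beta> j(1))
  qed
  ultimately have "alg_run \<alpha> (Suc M) \<beta>"
    using M(2,3) unfolding alg_run_def by (simp add: \<beta>)
  moreover have "\<beta> 1 = orient b (x\<^sub>1, y\<^sub>1)"
    by (simp add: \<beta>_def s_def)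
  ultimately show ?thesis by blast
qed

text \<open>The second branch of \<open>phi \<alpha> \<beta>\<close> is the positive root of
  \<open>x\<^sup>2 - \<alpha> (4\<pi> - \<beta>) x - 4\<pi>\<^sup>2 (1 - \<alpha>)\<close>; lying beyond it is the entry condition of
  \<open>astep_reaches_2pi\<close>.\<close>

lemma phi_less:
  assumes "0 < \<alpha>" "\<alpha> \<le> 1" "0 < \<beta>" "phi \<alpha> \<beta> < x"
  shows "0 < x" "4*pi^2 < x*\<beta>" "4*pi*\<alpha> < gfun \<alpha> x + \<alpha>*\<beta>"
proof -
  define B where "B = \<alpha>*(4*pi - \<beta>)"
  define D where "D = B^2 + 16*pi^2*(1 - \<alpha>)"
  have "0 \<le> D" using assms by (simp add: D_def)
  have "phi \<alpha> \<beta> = max (4*pi^2/\<beta>) ((B + sqrt D)/2)"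
    by (simp add: phi_def B_def D_def power_mult_distrib)
  then have x1: "4*pi^2/\<beta> < x" and x2: "(B + sqrt D)/2 < x"
    using assms(4) by auto
  show "0 < x"
    using x1 assms(3) by (smt (verit) divide_pos_pos pi_gt_zero zero_less_power)
  show "4*pi^2 < x*\<beta>"
    using x1 assms(3) by (simp add: divide_less_eq)
  have "sqrt D ^ 2 = D" using \<open>0 \<le> D\<close> by simp
  then have "x^2 - B*x - 4*pi^2*(1 - \<alpha>) = (x - (B + sqrt D)/2) * (x - (B - sqrt D)/2)"
    by (simp add: D_def field_simps power2_eq_square)
  moreover have "B + sqrt D < 2*x"
    using x2 by simp
  then have "B - sqrt D < 2*x"
    using real_sqrt_ge_zero[OF \<open>0 \<le> D\<close>] by linarith
  then have "0 < x - (B - sqrt D)/2"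
    by simp
  ultimately have "0 < x^2 - B*x - 4*pi^2*(1 - \<alpha>)"
    using x2 by simp
  then have "B < x - 4*pi^2*(1 - \<alpha>)/x"
    using \<open>0 < x\<close> by (simp add: field_simps power2_eq_square)
  then show "4*pi*\<alpha> < gfun \<alpha> x + \<alpha>*\<beta>"
    unfolding gfun_def B_def by (simp add: algebra_simps)
qed

lemma alg_run_exists:
  assumes "0 < \<alpha>" "\<alpha> \<le> 1" "(bL, bR) \<in> Dom \<alpha>"
  shows "\<exists>N \<beta>. alg_run \<alpha> N \<beta> \<and> \<beta> 1 = (bL, bR)"
proof -
  consider "2*pi < bL" "2*pi < bR" | "bL \<le> 2*pi" | "2*pi < bL" "bR \<le> 2*pi"
    by linarith
  then show ?thesis
  proof cases
    case 1
    moreover have "0 < bL" "0 < bR" using 1 pi_gt_zero by linarith+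
    ultimately have "alg_run \<alpha> 1 (\<lambda>_. (bL, bR))"
      by (auto simp: alg_run_def)
    then show ?thesis by blast
  next
    case 2
    with assms(3) have "2*pi < bR" "phi \<alpha> bR < bL"
      by (auto simp: Dom_def)
    moreover have "0 < bR" using \<open>2*pi < bR\<close> pi_gt_zero by linarith
    ultimately show ?thesis
      using alg_run_from_astep[OF assms(1,2), of bL bR True] phi_less[OF assms(1,2) \<open>0 < bR\<close>] 2
      by (simp add: orient_def mult.commute)
  next
    case 3
    with assms(3) have "2*pi < bL" "phi \<alpha> bL < bR"
      by (auto simp: Dom_def)
    moreover have "0 < bL" using \<open>2*pi < bL\<close> pi_gt_zero by linarith
    ultimately show ?thesis
      using alg_run_from_astep[OF assms(1,2), of bR bL False] phi_less[OF assms(1,2) \<open>0 < bL\<close>] 3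
      by (simp add: orient_def)
  qed
qed

section \<open>The partition function along a run\<close>

definition weight :: "(real \<times> real \<Rightarrow> nat) \<Rightarrow> real \<Rightarrow> real \<Rightarrow> real \<times> real \<Rightarrow> real" where
  "weight n a b = (\<lambda>(h, hb). real (n (h, hb)) * exp (- h * a - hb * b))"

definition Zred :: "(real \<times> real \<Rightarrow> nat) \<Rightarrow> real \<Rightarrow> real \<Rightarrow> real" where
  "Zred n a b = (\<Sum>\<^sub>\<infinity>p. weight n a b p)"

lemma ZL_eq_infsum_weight: "ZL c n \<alpha> a b = (\<Sum>\<^sub>\<infinity>p\<in>{(h, hb). min h hb \<le> \<alpha> * c / 24}. weight n a b p)"
  by (simp add: ZL_def weight_def)

lemma ZH_eq_infsum_weight: "ZH c n \<alpha> a b = (\<Sum>\<^sub>\<infinity>p\<in>{(h, hb). h > \<alpha> * c / 24 \<and> hb > \<alpha> * c / 24}. weight n a b p)"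
  by (simp add: ZH_def weight_def)

lemma weight_nonneg: "0 \<le> weight n a b p"
  by (cases p) (simp add: weight_def)

lemma Zred_nonneg: "0 \<le> Zred n a b"
  unfolding Zred_def by (rule infsum_nonneg) (rule weight_nonneg)

lemma ZL_nonneg: "0 \<le> ZL c n \<alpha> a b"
  unfolding ZL_eq_infsum_weight by (rule infsum_nonneg) (rule weight_nonneg)

lemma exp_mult_weight:
  "exp ((c/24)*(a + b)) * weight n a b p =
     (case p of (h, hb) \<Rightarrow> real (n (h, hb)) * exp (-(h - c/24) * a - (hb - c/24) * b))"
  by (cases p) (simp add: weight_def mult.left_commute exp_add[symmetric] algebra_simps)

lemma weight_summable_on:
  assumes "cft_spectrum c n" "0 < a" "0 < b"
  shows "weight n a b summable_on A"
proof -
  have "(\<lambda>p. exp ((c/24)*(a + b)) * weight n a b p) summable_on UNIV"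
    using assms unfolding cft_spectrum_def exp_mult_weight by blast
  then have "(\<lambda>p. exp (-(c/24)*(a + b)) * (exp ((c/24)*(a + b)) * weight n a b p)) summable_on UNIV"
    by (rule summable_on_cmult_right)
  then have "weight n a b summable_on UNIV"
    by (simp add: mult.assoc[symmetric] exp_add[symmetric])
  then show ?thesis
    using summable_on_subset_banach by blast
qed

lemma Zpart_eq_exp_Zred: "Zpart c n a b = exp ((c/24)*(a + b)) * Zred n a b"
  unfolding Zpart_def Zred_def infsum_cmult_right'[symmetric] exp_mult_weight by simp

lemma Zred_eq_ZL_plus_ZH:
  assumes "cft_spectrum c n" "0 < a" "0 < b"
  shows "Zred n a b = ZL c n \<alpha> a b + ZH c n \<alpha> a b"
proof -
  let ?L = "{(h, hb). min h hb \<le> \<alpha> * c / 24}"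
  let ?H = "{(h::real, hb::real). h > \<alpha> * c / 24 \<and> hb > \<alpha> * c / 24}"
  have disj: "?L \<inter> ?H = {}" by auto
  have "Zred n a b = (\<Sum>\<^sub>\<infinity>p\<in>?L \<union> ?H. weight n a b p)"
    unfolding Zred_def by (rule arg_cong[where f = "infsum _"]) auto
  also have "\<dots> = (\<Sum>\<^sub>\<infinity>p\<in>?L. weight n a b p) + (\<Sum>\<^sub>\<infinity>p\<in>?H. weight n a b p)"
    by (rule infsum_Un_disjoint[OF weight_summable_on[OF assms] weight_summable_on[OF assms] disj])
  finally show ?thesis
    by (simp add: ZL_eq_infsum_weight ZH_eq_infsum_weight)
qed

lemma Zred_modular:
  assumes "cft_spectrum c n" "0 < a" "0 < b"
  shows "Zred n a b = exp ((c/24)*(4*pi^2/a + 4*pi^2/b - a - b)) * Zred n (4*pi^2/a) (4*pi^2/b)"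
proof -
  define u where "u = (c/24)*(a + b)"
  define v where "v = (c/24)*(4*pi^2/a + 4*pi^2/b)"
  have "exp u * Zred n a b = exp v * Zred n (4*pi^2/a) (4*pi^2/b)"
    using assms unfolding u_def v_def Zpart_eq_exp_Zred[symmetric] cft_spectrum_def by blast
  then have "Zred n a b = exp (v - u) * Zred n (4*pi^2/a) (4*pi^2/b)"
    by (simp add: exp_diff eq_divide_eq mult.commute)
  moreover have "v - u = (c/24)*(4*pi^2/a + 4*pi^2/b - a - b)"
    by (simp add: u_def v_def algebra_simps)
  ultimately show ?thesis by simp
qed

lemma ZH_le_exp_ZH:
  assumes "cft_spectrum c n" "0 < a'" "0 < b'" "a' \<le> bL" "b' \<le> bR"
  shows "ZH c n \<alpha> bL bR \<le> exp (-(\<alpha>*c/24)*(bL - a' + bR - b')) * ZH c n \<alpha> a' b'"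
proof -
  define k where "k = \<alpha>*c/24"
  define E where "E = exp (-k*(bL - a' + bR - b'))"
  let ?H = "{(h::real, hb::real). h > \<alpha> * c / 24 \<and> hb > \<alpha> * c / 24}"
  have "weight n bL bR p \<le> E * weight n a' b' p" if heavy: "p \<in> ?H" for p
  proof -
    obtain h hb where p: "p = (h, hb)" "k < h" "k < hb"
      using heavy by (auto simp: k_def)
    have "k*(bL - a') \<le> h*(bL - a')" "k*(bR - b') \<le> hb*(bR - b')"
      using p(2,3) assms(4,5) by (auto intro: mult_right_mono)
    then have "- h * bL - hb * bR \<le> -k*(bL - a' + bR - b') + (- h * a' - hb * b')"
      by (simp add: algebra_simps)
    then have "exp (- h * bL - hb * bR) \<le> E * exp (- h * a' - hb * b')"
      unfolding E_def exp_add[symmetric] by simp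
    then have "real (n (h, hb)) * exp (- h * bL - hb * bR) \<le> real (n (h, hb)) * (E * exp (- h * a' - hb * b'))"
      by (rule mult_left_mono) simp
    then show ?thesis
      by (simp add: p(1) weight_def mult.left_commute)
  qed
  then have "ZH c n \<alpha> bL bR \<le> (\<Sum>\<^sub>\<infinity>p\<in>?H. E * weight n a' b' p)"
    unfolding ZH_eq_infsum_weight using assms
    by (intro infsum_mono summable_on_cmult_right weight_summable_on) auto
  then show ?thesis
    by (simp add: ZH_eq_infsum_weight infsum_cmult_right' E_def k_def)
qed

lemma ZH_le_Zred_dual:
  assumes "cft_spectrum c n" "0 < a'" "0 < b'" "a' \<le> bL" "b' \<le> bR"
    and gain: "4*pi^2/a' + 4*pi^2/b' - a' - b' \<le> \<alpha>*(bL + bR - a' - b')"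
  shows "ZH c n \<alpha> bL bR \<le> Zred n (4*pi^2/a') (4*pi^2/b')"
proof -
  define E where "E = exp (-(\<alpha>*c/24)*(bL - a' + bR - b'))"
  define F where "F = exp ((c/24)*(4*pi^2/a' + 4*pi^2/b' - a' - b'))"
  have "E * F \<le> 1"
  proof -
    have "0 \<le> c" using assms(1) by (simp add: cft_spectrum_def)
    then have "(c/24)*(4*pi^2/a' + 4*pi^2/b' - a' - b') \<le> (c/24)*(\<alpha>*(bL + bR - a' - b'))"
      using gain by (intro mult_left_mono) auto
    then show ?thesis
      by (simp add: E_def F_def exp_add[symmetric] field_simps)
  qed
  have "ZH c n \<alpha> bL bR \<le> E * ZH c n \<alpha> a' b'"
    unfolding E_def by (rule ZH_le_exp_ZH[OF assms(1-5)])
  also have "\<dots> \<le> E * Zred n a' b'"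
    using Zred_eq_ZL_plus_ZH[OF assms(1-3), of \<alpha>] ZL_nonneg[of c n \<alpha> a' b'] by (simp add: E_def)
  also have "\<dots> = (E * F) * Zred n (4*pi^2/a') (4*pi^2/b')"
    using Zred_modular[OF assms(1-3)] by (simp add: F_def)
  also have "\<dots> \<le> Zred n (4*pi^2/a') (4*pi^2/b')"
    using \<open>E * F \<le> 1\<close> Zred_nonneg mult_right_mono by fastforce
  finally show ?thesis .
qed

lemma ZH_le_Zred_step_solution:
  fixes \<alpha> x y t :: real
  defines "bt \<equiv> btilde \<alpha> x y"
  assumes "cft_spectrum c n" "0 < \<alpha>" "\<alpha> \<le> 1" "0 < x" "x \<le> 2*pi" "2*pi < y" "4*pi^2 < x*y"
    and "0 < t" "t_eq \<alpha> bt y t"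
  shows "ZH c n \<alpha> x y \<le> Zred n (4*pi^2/bt) t" "ZH c n \<alpha> y x \<le> Zred n t (4*pi^2/bt)"
proof -
  note b = btilde_bounds[OF assms(3-8), folded bt_def]
  note s = step_solution_bounds[OF assms(3-9) assms(10)[unfolded bt_def], folded bt_def]
  have "4*pi^2/t \<le> y"
    using s(1) assms(9) by (simp add: divide_le_eq mult.commute)
  then show "ZH c n \<alpha> x y \<le> Zred n (4*pi^2/bt) t"
    using ZH_le_Zred_dual[OF assms(2) b(1) _ b(2), of "4*pi^2/t" y \<alpha>] s(2) assms(9) by simp
  show "ZH c n \<alpha> y x \<le> Zred n t (4*pi^2/bt)"
    using ZH_le_Zred_dual[OF assms(2) _ b(1) \<open>4*pi^2/t \<le> y\<close> b(2), of \<alpha>] s(2) assms(9)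
    by (simp add: algebra_simps)
qed

lemma ZH_le_Zred_alg_step:
  assumes "cft_spectrum c n" "0 < \<alpha>" "\<alpha> \<le> 1"
    and "0 < fst p" "0 < snd p" "4*pi^2 < fst p * snd p" "alg_step \<alpha> p q"
  shows "ZH c n \<alpha> (fst p) (snd p) \<le> Zred n (fst q) (snd q)"
proof (cases p)
  case (Pair x y)
  have not_both: "\<not> (x \<le> 2*pi \<and> y \<le> 2*pi)"
  proof
    assume "x \<le> 2*pi \<and> y \<le> 2*pi"
    then have "x*y \<le> 2*pi*(2*pi)"
      using assms(4,5) Pair by (intro mult_mono) auto
    then show False
      using assms(6) Pair by (simp add: power2_eq_square)
  qed
  show ?thesis
  proof (cases "x \<le> 2*pi")
    case True
    then have "0 < x" "2*pi < y" "4*pi^2 < x*y"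
      using assms(4-6) not_both Pair by auto
    moreover have "fst q = 4*pi^2/btilde \<alpha> x y" "0 < snd q" "t_eq \<alpha> (btilde \<alpha> x y) y (snd q)"
      using assms(7) True Pair by (simp_all add: alg_step_def Let_def)
    ultimately show ?thesis
      using ZH_le_Zred_step_solution(1)[OF assms(1-3) _ True] Pair by (metis prod.collapse fst_conv snd_conv)
  next
    case False
    then have "y \<le> 2*pi"
      using assms(7) Pair by (auto simp: alg_step_def split: if_splits)
    moreover have "0 < y" "2*pi < x" "4*pi^2 < y*x"
      using assms(4-6) False Pair by (auto simp: mult.commute)
    moreover have "snd q = 4*pi^2/btilde \<alpha> y x" "0 < fst q" "t_eq \<alpha> (btilde \<alpha> y x) x (fst q)"
      using assms(7) False \<open>y \<le> 2*pi\<close> Pair by (simp_all add: alg_step_def Let_def)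
    ultimately show ?thesis
      using ZH_le_Zred_step_solution(2)[OF assms(1-3)] Pair by (metis prod.collapse fst_conv snd_conv)
  qed
qed

lemma Zred_eq_0_imp_spectrum_empty:
  assumes "cft_spectrum c n" "0 < a" "0 < b" "Zred n a b = 0"
  shows "n p = 0"
proof -
  have "weight n a b p = 0"
    using assms(4) weight_summable_on[OF assms(1-3)] weight_nonneg
    by (intro nonneg_infsum_le_0D[of _ UNIV]) (auto simp: Zred_def)
  then show ?thesis
    by (cases p) (simp add: weight_def)
qed

lemma Zred_le_telescoped:
  assumes "cft_spectrum c n" "0 < \<alpha>" "\<alpha> \<le> 1" "alg_run \<alpha> N \<beta>"
  shows "Zred n (fst (\<beta> 1)) (snd (\<beta> 1)) \<le>
    (\<Sum>i=1..N. ZL c n \<alpha> (fst (\<beta> i)) (snd (\<beta> i))) + ZH c n \<alpha> (fst (\<beta> N)) (snd (\<beta> N))"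
proof -
  have split: "Zred n (fst (\<beta> i)) (snd (\<beta> i)) =
      ZL c n \<alpha> (fst (\<beta> i)) (snd (\<beta> i)) + ZH c n \<alpha> (fst (\<beta> i)) (snd (\<beta> i))"
    if "1 \<le> i" "i \<le> N" for i
    using assms(4) that Zred_eq_ZL_plus_ZH[OF assms(1)] by (simp add: alg_run_def)
  have step: "ZH c n \<alpha> (fst (\<beta> i)) (snd (\<beta> i)) \<le> Zred n (fst (\<beta> (Suc i))) (snd (\<beta> (Suc i)))"
    if "1 \<le> i" "i < N" for i
    using assms(4) that ZH_le_Zred_alg_step[OF assms(1-3)] by (simp add: alg_run_def)
  have "Zred n (fst (\<beta> 1)) (snd (\<beta> 1)) \<le>
      (\<Sum>i=1..m. ZL c n \<alpha> (fst (\<beta> i)) (snd (\<beta> i))) + ZH c n \<alpha> (fst (\<beta> m)) (snd (\<beta> m))"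
    if "1 \<le> m" "m \<le> N" for m
    using that
  proof (induction m rule: nat_induct_at_least)
    case base
    then show ?case using split[of 1] by simp
  next
    case (Suc m)
    then show ?case
      using step[of m] split[of "Suc m"] by simp
  qed
  then show ?thesis
    using assms(4) by (simp add: alg_run_def)
qed

lemma err_le_alg_run:
  assumes "cft_spectrum c n" "0 < \<alpha>" "\<alpha> \<le> 1" "alg_run \<alpha> N \<beta>" "\<beta> 1 = (bL, bR)"
  shows "err c n bL bR \<le>
    ln ((\<Sum>i=1..N. ZL c n \<alpha> (fst (\<beta> i)) (snd (\<beta> i))) + ZH c n \<alpha> (fst (\<beta> N)) (snd (\<beta> N)))"
    (is "_ \<le> ln ?R")
proof -
  have pos: "0 < bL" "0 < bR"
    using assms(4,5) by (auto simp: alg_run_def)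
  have err: "err c n bL bR = ln (exp ((c/24)*(bL + bR)) * Zred n bL bR) - c/24*(bL + bR)"
    by (simp add: err_def Zpart_eq_exp_Zred)
  show ?thesis
  proof (cases "Zred n bL bR = 0")
    case False
    then have "0 < Zred n bL bR"
      using Zred_nonneg[of n bL bR] by linarith
    moreover have "Zred n bL bR \<le> ?R"
      using Zred_le_telescoped[OF assms(1-4)] assms(5) by simp
    ultimately show ?thesis
      unfolding err by (simp add: ln_mult)
  next
    text \<open>As \<open>ln 0 = 0\<close>, monotonicity of \<open>ln\<close> does not help here; instead the spectrum is
      empty, so \<open>?R = 0\<close> and \<open>err c n bL bR = -c/24 (bL + bR) \<le> 0\<close>.\<close>
    case True
    then have "\<And>p. n p = 0"
      using Zred_eq_0_imp_spectrum_empty[OF assms(1) pos] by blast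
    then have "weight n a b = (\<lambda>_. 0)" for a b
      by (auto simp: weight_def)
    then have "?R = 0"
      by (simp add: ZL_eq_infsum_weight ZH_eq_infsum_weight)
    moreover have "0 \<le> c"
      using assms(1) by (simp add: cft_spectrum_def)
    ultimately show ?thesis
      unfolding err using True pos by simp
  qed
qed

theorem theorem1:
  fixes c \<alpha> bL bR :: real and n :: "real \<times> real \<Rightarrow> nat"
  assumes "0 < \<alpha>" and "\<alpha> \<le> 1"
    and "cft_spectrum c n"
    and "(bL, bR) \<in> Dom \<alpha>"
  shows "\<exists>N::nat. \<exists>\<beta>::nat \<Rightarrow> real \<times> real.
           N \<ge> 1 \<and> \<beta> 1 = (bL, bR) \<and>
           (\<forall>i. 1 \<le> i \<and> i < N \<longrightarrow> alg_step \<alpha> (\<beta> i) (\<beta> (Suc i))) \<and>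
           (\<forall>i. 1 \<le> i \<and> i < N \<longrightarrow> fst (\<beta> i) * snd (\<beta> i) > 4*pi^2) \<and>
           fst (\<beta> N) > 2*pi \<and> snd (\<beta> N) > 2*pi \<and>
           err c n bL bR \<le>
             ln ((\<Sum>i=1..N. ZL c n \<alpha> (fst (\<beta> i)) (snd (\<beta> i)))
                 + ZH c n \<alpha> (fst (\<beta> N)) (snd (\<beta> N)))"
proof -
  obtain N \<beta> where run: "alg_run \<alpha> N \<beta>" "\<beta> 1 = (bL, bR)"
    using alg_run_exists[OF assms(1,2,4)] by blast
  have "err c n bL bR \<le>
      ln ((\<Sum>i=1..N. ZL c n \<alpha> (fst (\<beta> i)) (snd (\<beta> i))) + ZH c n \<alpha> (fst (\<beta> N)) (snd (\<beta> N)))"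
    using err_le_alg_run[OF assms(3,1,2) run] .
  with run show ?thesis
    unfolding alg_run_def by blast
qed

end
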